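(* Let $A$ be a commutative normed algebra which does not consist entirely of topological divisors of zero (i.e. some element of $A$ is not a TDZ in $A$). If $A$ has approximate units or an approximate identity, then the completion $\mathrm{cl}(A)$ of $A$ is unital. *)

theory Defs
  imports "HOL-Analysis.Analysis"
begin

definition normed_subalgebra :: "'b::real_normed_algebra set \<Rightarrow> bool" where
  "normed_subalgebra A \<longleftrightarrow> 0 \<in> A \<and> (\<forall>x\<in>A. \<forall>y\<in>A. x + y \<in> A \<and> x - y \<in> A \<and> x * y \<in> A)
     \<and> (\<forall>c. \<forall>x\<in>A. c *\<^sub>R x \<in> A)"

definition commutative_on :: "'b::real_normed_algebra set \<Rightarrow> bool" where
  "commutative_on A \<longleftrightarrow> (\<forall>x\<in>A. \<forall>y\<in>A. x * y = y * x)"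

definition tdz_in :: "'b::real_normed_algebra set \<Rightarrow> 'b \<Rightarrow> bool" where
  "tdz_in A x \<longleftrightarrow> x \<in> A \<and>
     (\<exists>z. (\<forall>n. z n \<in> A \<and> norm (z n) = 1) \<and> (\<lambda>n. x * z n) \<longlonglongrightarrow> 0)"

definition has_approx_units :: "'b::real_normed_algebra set \<Rightarrow> bool" where
  "has_approx_units A \<longleftrightarrow> (\<forall>x\<in>A. \<forall>\<epsilon>>0. \<exists>u\<in>A. norm (u * x - x) < \<epsilon>)"

text \<open>A has an approximate identity: a net in A, represented by a proper filter F
  eventually living in A, along which e * x tends to x for every x in A.\<close>
definition has_approx_identity :: "'b::real_normed_algebra set \<Rightarrow> bool" where
  "has_approx_identity A \<longleftrightarrow> (\<exists>F::'b filter. F \<noteq> bot \<and> eventually (\<lambda>e. e \<in> A) F \<and>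
     (\<forall>x\<in>A. ((\<lambda>e. e * x) \<longlongrightarrow> x) F))"

end

theory Submission
  imports Defs
begin

text \<open>An element a that is not a topological divisor of zero is bounded below,
  c \<parallel>z\<parallel> \<le> \<parallel>a z\<parallel>, and by density this persists on the completion. If a is approximately
  fixed by left multiplication with elements u_n, then c \<parallel>u_m - u_n\<parallel> \<le> \<parallel>u_m a - u_n a\<parallel>
  makes (u_n) a Cauchy sequence; its limit e satisfies e a = a, and since a is
  injective and commutes with everything, a (e x - x) = 0 forces e x = x.\<close>

lemma commute_if_dense_commutative:
  fixes A :: "'a::real_normed_algebra set" and x y :: 'a
  assumes "commutative_on A" and "closure A = UNIV"
  shows "x * y = y * x"
proof -
  have "closed {p :: 'a \<times> 'a. fst p * snd p = snd p * fst p}"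
    by (intro closed_Collect_eq continuous_intros)
  moreover have "A \<times> A \<subseteq> {p. fst p * snd p = snd p * fst p}"
    using assms(1) unfolding commutative_on_def by auto
  ultimately have "closure (A \<times> A) \<subseteq> {p. fst p * snd p = snd p * fst p}"
    by (rule closure_minimal[rotated])
  then have "UNIV \<subseteq> {p :: 'a \<times> 'a. fst p * snd p = snd p * fst p}"
    using assms(2) by (simp add: closure_Times)
  from subsetD[OF this, of "(x, y)"] show ?thesis
    by simp
qed

lemma has_approx_identity_imp_has_approx_units:
  assumes "has_approx_identity A"
  shows "has_approx_units A"
  unfolding has_approx_units_def
proof (intro ballI allI impI)
  fix x and \<epsilon> :: real
  assume x: "x \<in> A" and "\<epsilon> > 0"
  obtain F where F: "F \<noteq> bot" "eventually (\<lambda>e. e \<in> A) F" "\<forall>x\<in>A. ((\<lambda>e. e * x) \<longlongrightarrow> x) F"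
    using assms unfolding has_approx_identity_def by blast
  have "eventually (\<lambda>u. dist (u * x) x < \<epsilon>) F"
    using F(3) x \<open>\<epsilon> > 0\<close> unfolding tendsto_iff by blast
  with F(2) have "eventually (\<lambda>u. u \<in> A \<and> norm (u * x - x) < \<epsilon>) F"
    by (auto elim: eventually_mono simp: dist_norm eventually_conj_iff)
  from eventually_happens'[OF F(1) this] show "\<exists>u\<in>A. norm (u * x - x) < \<epsilon>"
    by blast
qed

lemma approx_units_sequence:
  assumes "has_approx_units A" and "a \<in> A"
  obtains u where "\<And>n. u n \<in> A" and "(\<lambda>n. u n * a) \<longlonglongrightarrow> a"
proof -
  have "\<forall>n::nat. \<exists>u\<in>A. norm (u * a - a) < 1 / real (Suc n)"
    using assms unfolding has_approx_units_def by simp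
  then obtain u where u: "\<And>n. u n \<in> A" "\<And>n. norm (u n * a - a) < 1 / real (Suc n)"
    by metis
  from u(2) have "(\<lambda>n. u n * a - a) \<longlonglongrightarrow> 0"
    by (rule LIMSEQ_norm_0)
  then have "(\<lambda>n. u n * a) \<longlonglongrightarrow> a"
    by (simp add: LIM_zero_iff)
  with u(1) show ?thesis
    by (rule that)
qed

lemma bounded_below_if_not_tdz:
  assumes "normed_subalgebra A" and "a \<in> A" and "\<not> tdz_in A a"
  obtains c where "c > 0" and "\<And>z. z \<in> A \<Longrightarrow> c * norm z \<le> norm (a * z)"
proof (rule ccontr)
  assume "\<not> thesis"
  with that have "\<forall>n::nat. \<exists>z\<in>A. norm (a * z) < (1 / real (Suc n)) * norm z"
    by (metis divide_pos_pos not_le of_nat_0_less_iff zero_less_Suc zero_less_one)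
  then obtain z where z: "\<And>n. z n \<in> A" "\<And>n. norm (a * z n) < (1 / real (Suc n)) * norm (z n)"
    by metis
  have nonzero: "z n \<noteq> 0" for n
    using z(2)[of n] by auto
  define w where "w n = inverse (norm (z n)) *\<^sub>R z n" for n
  have "w n \<in> A" for n
    using z(1) assms(1) unfolding w_def normed_subalgebra_def by auto
  moreover have "norm (w n) = 1" for n
    using nonzero unfolding w_def by simp
  moreover have "norm (a * w n) < 1 / real (Suc n)" for n
  proof -
    have "norm (a * w n) = norm (a * z n) / norm (z n)"
      unfolding w_def by (simp add: mult_scaleR_right divide_inverse mult.commute)
    also have "\<dots> < 1 / real (Suc n)"
      using z(2)[of n] nonzero by (simp add: divide_less_eq)
    finally show ?thesis .
  qed
  then have "(\<lambda>n. a * w n) \<longlonglongrightarrow> 0"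
    by (rule LIMSEQ_norm_0)
  ultimately have "tdz_in A a"
    unfolding tdz_in_def using assms(2) by blast
  with assms(3) show False ..
qed

lemma bounded_below_closure:
  fixes a :: "'a::real_normed_algebra"
  assumes "\<And>z. z \<in> A \<Longrightarrow> c * norm z \<le> norm (a * z)" and "z \<in> closure A"
  shows "c * norm z \<le> norm (a * z)"
proof -
  have "closed {z. c * norm z \<le> norm (a * z)}"
    by (intro closed_Collect_le continuous_intros)
  with assms show ?thesis
    using closure_minimal[of A "{z. c * norm z \<le> norm (a * z)}"] by auto
qed

lemma approx_left_units_converge_if_bounded_below:
  fixes a :: "'a::{real_normed_algebra, banach}"
  assumes "c > 0" and below: "\<And>z. c * norm z \<le> norm (z * a)"
    and ua: "(\<lambda>n. u n * a) \<longlonglongrightarrow> a"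
  obtains e where "e * a = a"
proof -
  have "Cauchy u"
  proof (rule metric_CauchyI)
    fix \<epsilon> :: real
    assume "\<epsilon> > 0"
    moreover have "Cauchy (\<lambda>n. u n * a)"
      using ua by (rule LIMSEQ_imp_Cauchy)
    ultimately obtain N where N: "\<forall>m\<ge>N. \<forall>n\<ge>N. dist (u m * a) (u n * a) < c * \<epsilon>"
      using \<open>c > 0\<close> unfolding Cauchy_def by (meson mult_pos_pos)
    have "dist (u m) (u n) < \<epsilon>" if "m \<ge> N" "n \<ge> N" for m n
    proof -
      have "c * dist (u m) (u n) \<le> dist (u m * a) (u n * a)"
        using below[of "u m - u n"] by (simp add: dist_norm left_diff_distrib)
      also have "\<dots> < c * \<epsilon>"
        using N that by blast
      finally show ?thesis
        using \<open>c > 0\<close> by simp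
    qed
    then show "\<exists>M. \<forall>m\<ge>M. \<forall>n\<ge>M. dist (u m) (u n) < \<epsilon>"
      by blast
  qed
  then obtain e where "u \<longlonglongrightarrow> e"
    using Cauchy_convergent_iff convergent_def by blast
  then have "(\<lambda>n. u n * a) \<longlonglongrightarrow> e * a"
    by (intro tendsto_intros)
  with ua have "e * a = a"
    using LIMSEQ_unique by blast
  then show ?thesis ..
qed

lemma left_identity_if_bounded_below:
  fixes a e :: "'a::real_normed_algebra"
  assumes "c > 0" and below: "\<And>z. c * norm z \<le> norm (a * z)"
    and "e * a = a" and "a * e = e * a"
  shows "e * x = x"
proof -
  have "a * (e * x - x) = (e * a) * x - a * x"
    using assms(4) by (simp add: right_diff_distrib mult.assoc[symmetric])
  also have "\<dots> = 0"
    using assms(3) by simp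
  finally have "c * norm (e * x - x) \<le> 0"
    using below[of "e * x - x"] by simp
  with \<open>c > 0\<close> show ?thesis
    by (simp add: mult_le_0_iff)
qed

theorem mainTheorem6:
  fixes A :: "'b::{real_normed_algebra, banach} set"
  assumes "normed_subalgebra A"
    and "commutative_on A"
    and "closure A = UNIV"
    and "\<exists>x\<in>A. \<not> tdz_in A x"
    and "has_approx_units A \<or> has_approx_identity A"
  shows "\<exists>e::'b. \<forall>x. e * x = x \<and> x * e = x"
proof -
  have comm: "x * y = y * x" for x y :: 'b
    using assms(2,3) by (rule commute_if_dense_commutative)
  obtain a where a: "a \<in> A" "\<not> tdz_in A a"
    using assms(4) by blast
  obtain c where c: "c > 0" and "\<And>z. z \<in> A \<Longrightarrow> c * norm z \<le> norm (a * z)"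
    using bounded_below_if_not_tdz[OF assms(1) a] by blast
  with assms(3) have below: "c * norm z \<le> norm (a * z)" for z
    using bounded_below_closure by blast
  have "has_approx_units A"
    using assms(5) has_approx_identity_imp_has_approx_units by blast
  then obtain u where "(\<lambda>n. u n * a) \<longlonglongrightarrow> a"
    using approx_units_sequence a(1) by blast
  moreover have "c * norm z \<le> norm (z * a)" for z
    using below[of z] by (simp add: comm[of z])
  ultimately obtain e where "e * a = a"
    using approx_left_units_converge_if_bounded_below[OF c] by blast
  then have "e * x = x" for x
    using left_identity_if_bounded_below[OF c below] comm by blast
  then show ?thesis
    using comm by metis
qed

end
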